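(* If a deterministic KAT automaton is $k$-dense, then it has at least $k$ states.
   Context: Atoms $\mathsf{At}_T=2^T$. Deterministic KAT automaton over $(\Sigma,T)$: $A=(Q,\delta,\iota)$, $Q$ finite set of states, $\delta:Q\times\mathsf{At}_T\to\{\mathsf{accept},\mathsf{reject}\}+\Sigma\times Q$, $\iota:\mathsf{At}_T\to\{\mathsf{accept},\mathsf{reject}\}+\Sigma\times Q$. Write $q\xrightarrow{\alpha\mid p}_Aq'$ for $\delta(q,\alpha)=(p,q')$; $q$ accepts $\alpha$ if $\delta(q,\alpha)=\mathsf{accept}$. $A$ is $k$-dense if there exist non-empty subsets $S_1,\dots,S_k\subseteq Q$, distinct atoms $\alpha_1,\dots,\alpha_k\in\mathsf{At}_T$ and, for all $1\le i,j\le k$ and $q\in S_i$, an action $p_{qj}\in\Sigma$, such that for all $i,j,m\le k$: (1) if $q\in S_i$ then $q$ accepts $\alpha_i$; (2) if $i\ne j$ and $q\in S_i$, there is $q'\in S_j$ with $q\xrightarrow{\alpha_j\mid p_{qj}}_Aq'$; (3) if $q\in S_i$ and $q'\in S_j$ with $p_{qm}=p_{q'm}$, then $i=j$. *)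

theory Defs
  imports Main
begin

datatype ('p, 'q) kat_out = Accept | Reject | Step 'p 'q

definition atoms :: "'t set \<Rightarrow> 't set set" where
  "atoms T = Pow T"

definition kat_automaton ::
  "'p set \<Rightarrow> 't set \<Rightarrow> 'q set \<Rightarrow> ('q \<Rightarrow> 't set \<Rightarrow> ('p,'q) kat_out)
     \<Rightarrow> ('t set \<Rightarrow> ('p,'q) kat_out) \<Rightarrow> bool" where
  "kat_automaton \<Sigma> T Q \<delta> \<iota> \<longleftrightarrow> finite \<Sigma> \<and> finite T \<and> finite Q \<and>
     (\<forall>q\<in>Q. \<forall>\<alpha>\<in>atoms T. \<forall>p q'. \<delta> q \<alpha> = Step p q' \<longrightarrow> p \<in> \<Sigma> \<and> q' \<in> Q) \<and>
     (\<forall>\<alpha>\<in>atoms T. \<forall>p q'. \<iota> \<alpha> = Step p q' \<longrightarrow> p \<in> \<Sigma> \<and> q' \<in> Q)"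

definition dense ::
  "'p set \<Rightarrow> 't set \<Rightarrow> 'q set \<Rightarrow> ('q \<Rightarrow> 't set \<Rightarrow> ('p,'q) kat_out) \<Rightarrow> nat \<Rightarrow> bool" where
  "dense \<Sigma> T Q \<delta> k \<longleftrightarrow>
    (\<exists>(S :: nat \<Rightarrow> 'q set) (\<alpha> :: nat \<Rightarrow> 't set) (pa :: 'q \<Rightarrow> nat \<Rightarrow> 'p).
      (\<forall>i\<in>{1..k}. S i \<noteq> {} \<and> S i \<subseteq> Q) \<and>
      (\<forall>i\<in>{1..k}. \<alpha> i \<in> atoms T) \<and>
      inj_on \<alpha> {1..k} \<and>
      (\<forall>i\<in>{1..k}. \<forall>q\<in>S i. \<forall>j\<in>{1..k}. pa q j \<in> \<Sigma>) \<and>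
      (\<forall>i\<in>{1..k}. \<forall>q\<in>S i. \<delta> q (\<alpha> i) = Accept) \<and>
      (\<forall>i\<in>{1..k}. \<forall>j\<in>{1..k}. i \<noteq> j \<longrightarrow>
          (\<forall>q\<in>S i. \<exists>q'\<in>S j. \<delta> q (\<alpha> j) = Step (pa q j) q')) \<and>
      (\<forall>i\<in>{1..k}. \<forall>j\<in>{1..k}. \<forall>m\<in>{1..k}. \<forall>q\<in>S i. \<forall>q'\<in>S j.
          pa q m = pa q' m \<longrightarrow> i = j))"

end

theory Submission
  imports Defs "HOL-Library.Disjoint_Sets"
begin

text \<open>Condition (3) of density, taken with \<open>q = q'\<close>, makes the sets \<open>S\<^sub>i\<close>
  pairwise disjoint; being non-empty subsets of \<open>Q\<close>, a choice of one state from
  each is an injection of \<open>{1..k}\<close> into \<open>Q\<close>.\<close>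

lemma card_le_if_disjoint_family_nonempty:
  assumes "finite Q"
    and "\<And>i. i \<in> I \<Longrightarrow> S i \<noteq> {} \<and> S i \<subseteq> Q"
    and "disjoint_family_on S I"
  shows "card I \<le> card Q"
proof -
  define pick where "pick i = (SOME q. q \<in> S i)" for i
  have pick_in: "pick i \<in> S i" if "i \<in> I" for i
    using assms(2)[OF that] unfolding pick_def by (simp add: some_in_eq)
  have "inj_on pick I"
  proof (rule inj_onI)
    fix i j assume "i \<in> I" "j \<in> I" "pick i = pick j"
    then show "i = j"
      using pick_in assms(3) by (metis disjoint_family_onD disjoint_iff)
  qed
  moreover have "pick ` I \<subseteq> Q"
    using pick_in assms(2) by blast
  ultimately show ?thesis
    using card_inj_on_le assms(1) by blast
qed

lemma dense_obtains_disjoint_family: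
  fixes \<Sigma> :: "'p set" and Q :: "'q set"
  assumes "dense \<Sigma> T Q \<delta> k"
  obtains S where "\<And>i. i \<in> {1..k} \<Longrightarrow> S i \<noteq> {} \<and> S i \<subseteq> Q"
    and "disjoint_family_on S {1..k}"
proof -
  obtain S :: "nat \<Rightarrow> 'q set" and pa :: "'q \<Rightarrow> nat \<Rightarrow> 'p" where
    nonempty: "\<forall>i\<in>{1..k}. S i \<noteq> {} \<and> S i \<subseteq> Q" and
    separating: "\<forall>i\<in>{1..k}. \<forall>j\<in>{1..k}. \<forall>m\<in>{1..k}. \<forall>q\<in>S i. \<forall>q'\<in>S j.
          pa q m = pa q' m \<longrightarrow> i = j"
    using assms unfolding dense_def by (elim exE conjE) (rule that)
  have "disjoint_family_on S {1..k}"
    unfolding disjoint_family_on_def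
  proof (intro ballI impI)
    fix i j assume "i \<in> {1..k}" "j \<in> {1..k}" "i \<noteq> j"
    then show "S i \<inter> S j = {}"
      using separating by blast
  qed
  then show ?thesis
    using nonempty that by blast
qed

theorem lemma6p18:
  fixes \<Sigma> :: "'p set" and T :: "'t set" and Q :: "'q set"
    and \<delta> :: "'q \<Rightarrow> 't set \<Rightarrow> ('p,'q) kat_out" and \<iota> :: "'t set \<Rightarrow> ('p,'q) kat_out"
    and k :: nat
  assumes "kat_automaton \<Sigma> T Q \<delta> \<iota>"
    and "dense \<Sigma> T Q \<delta> k"
  shows "card Q \<ge> k"
proof -
  have "finite Q"
    using assms(1) unfolding kat_automaton_def by blast
  obtain S where "\<And>i. i \<in> {1..k} \<Longrightarrow> S i \<noteq> {} \<and> S i \<subseteq> Q"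
    and "disjoint_family_on S {1..k}"
    using dense_obtains_disjoint_family[OF assms(2)] by blast
  then have "card {1..k} \<le> card Q"
    using card_le_if_disjoint_family_nonempty[OF \<open>finite Q\<close>] by blast
  then show ?thesis
    by simp
qed

end
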